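(* Let $n\ge k\ge d$ be positive integers. Let $\mathcal{Z}_{n,k,d}\subseteq\mathbb{Q}^{n+d+k}$ be the set of points $(z_1,\dots,z_n;z_{n+1},\dots,z_{n+d};z_{n+d+1},\dots,z_{n+d+k})$ for which there exist an injective function $f:\{n+1,\dots,n+d\}\hookrightarrow\{n+d+1,\dots,n+d+k\}$ with $z_i=z_{f(i)}$ for all $n+1\le i\le n+d$, and a surjective function $g:\{1,\dots,n\}\twoheadrightarrow\{n+1,\dots,n+d\}$ with $z_j=z_{g(j)}$ for all $1\le j\le n$. Let $J^{\mathbb{Q},\mathbf{t}}_{n,k,d}\subseteq\mathbb{Q}[\mathbf{x}_n,\mathbf{y}_d,\mathbf{t}_k]$ be the ideal generated by \begin{itemize} \item $e_r(\mathbf{t}_k) - e_{r-1}(\mathbf{t}_k)h_1(\mathbf{y}_d)+\cdots+(-1)^r h_r(\mathbf{y}_d)$ for all $r>k-d$, \item $e_r(\mathbf{x}_n) - e_{r-1}(\mathbf{x}_n)h_1(\mathbf{y}_d)+\cdots+(-1)^r h_r(\mathbf{y}_d)$ for all $r>n-d$, \item $x_i^d - x_i^{d-1}e_1(\mathbf{y}_d)+\cdots+(-1)^d e_d(\mathbf{y}_d)$ for $i=1,\dots,n$. \end{itemize} Then $J^{\mathbb{Q},\mathbf{t}}_{n,k,d}\subseteq\mathbf{I}(\mathcal{Z}_{n,k,d})$.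
   Context: $\mathbb{Q}[\mathbf{x}_n,\mathbf{y}_d,\mathbf{t}_k]$, with $\mathbf{x}_n=(x_1,\dots,x_n)$, $\mathbf{y}_d=(y_1,\dots,y_d)$, $\mathbf{t}_k=(t_1,\dots,t_k)$, is the coordinate ring of $\mathbb{Q}^{n+d+k}$ (the coordinates in that order), and $\mathbf{I}(\mathcal{Z})$ denotes the ideal of polynomials vanishing on $\mathcal{Z}$. $e_r,h_r$ are elementary and complete homogeneous symmetric polynomials ($e_0=h_0=1$, $e_r=0$ when $r$ exceeds the number of variables). *)

theory Defs
  imports Complex_Main "HOL-Library.Poly_Mapping"
begin

text \<open>Coordinate/variable number
  i (1-based, as in the paper) is the variable with index i - 1.\<close>

type_synonym mpoly = "(nat \<Rightarrow>\<^sub>0 nat) \<Rightarrow>\<^sub>0 rat"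

definition mpoly_var :: "nat \<Rightarrow> mpoly" where
  "mpoly_var v = Poly_Mapping.single (Poly_Mapping.single v 1) 1"

definition mpoly_ring :: "nat \<Rightarrow> mpoly set" where
  "mpoly_ring N = {p. \<forall>m\<in>Poly_Mapping.keys p. Poly_Mapping.keys m \<subseteq> {..<N}}"

definition mpoly_eval :: "(nat \<Rightarrow> rat) \<Rightarrow> mpoly \<Rightarrow> rat" where
  "mpoly_eval z p = (\<Sum>m\<in>Poly_Mapping.keys p. Poly_Mapping.lookup p m * (\<Prod>v\<in>Poly_Mapping.keys m. z v ^ Poly_Mapping.lookup m v))"

text \<open>Points of Q^N, as functions vanishing outside the first N indices.\<close>
definition points :: "nat \<Rightarrow> (nat \<Rightarrow> rat) set" where
  "points N = {z. \<forall>v\<ge>N. z v = 0}"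

definition vanishing_ideal :: "nat \<Rightarrow> (nat \<Rightarrow> rat) set \<Rightarrow> mpoly set" where
  "vanishing_ideal N Z = {p \<in> mpoly_ring N. \<forall>z\<in>Z. mpoly_eval z p = 0}"

definition is_ideal_in :: "'a::comm_ring_1 set \<Rightarrow> 'a set \<Rightarrow> bool" where
  "is_ideal_in R I \<longleftrightarrow> I \<subseteq> R \<and> 0 \<in> I \<and> (\<forall>a\<in>I. \<forall>b\<in>I. a + b \<in> I)
     \<and> (\<forall>r\<in>R. \<forall>a\<in>I. r * a \<in> I)"

definition ideal_gen_in :: "'a::comm_ring_1 set \<Rightarrow> 'a set \<Rightarrow> 'a set" where
  "ideal_gen_in R S = \<Inter>{I. is_ideal_in R I \<and> S \<subseteq> I}"

definition esym :: "nat \<Rightarrow> nat set \<Rightarrow> mpoly" where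
  "esym r V = (\<Sum>S\<in>{S. S \<subseteq> V \<and> card S = r}. \<Prod>v\<in>S. mpoly_var v)"

definition hsym :: "nat \<Rightarrow> nat set \<Rightarrow> mpoly" where
  "hsym r V = (\<Sum>m\<in>{m. Poly_Mapping.keys m \<subseteq> V \<and> sum (Poly_Mapping.lookup m) V = r}. Poly_Mapping.single m 1)"

text \<open>Variable index sets: x_i has index i-1, y_j index n+j-1, t_l index n+d+l-1.\<close>
definition xvars :: "nat \<Rightarrow> nat set" where "xvars n = {..<n}"
definition yvars :: "nat \<Rightarrow> nat \<Rightarrow> nat set" where "yvars n d = {n..<n+d}"
definition tvars :: "nat \<Rightarrow> nat \<Rightarrow> nat \<Rightarrow> nat set" where "tvars n d k = {n+d..<n+d+k}"

text \<open>The set Z_{n,k,d}, with coordinates z_1..z_{n+d+k} (1-based), z_i = z (i - 1).\<close>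
definition Zset :: "nat \<Rightarrow> nat \<Rightarrow> nat \<Rightarrow> (nat \<Rightarrow> rat) set" where
  "Zset n k d = {z \<in> points (n+d+k).
     (\<exists>f. (\<forall>i\<in>{n+1..n+d}. f i \<in> {n+d+1..n+d+k}) \<and> inj_on f {n+1..n+d} \<and>
          (\<forall>i\<in>{n+1..n+d}. z (i - 1) = z (f i - 1))) \<and>
     (\<exists>g. (\<forall>j\<in>{1..n}. g j \<in> {n+1..n+d}) \<and> g ` {1..n} = {n+1..n+d} \<and>
          (\<forall>j\<in>{1..n}. z (j - 1) = z (g j - 1)))}"

definition Jgens :: "nat \<Rightarrow> nat \<Rightarrow> nat \<Rightarrow> mpoly set" where
  "Jgens n k d =
     {(\<Sum>i=0..r. (-1)^i * esym (r - i) (tvars n d k) * hsym i (yvars n d)) | r. r > k - d}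
   \<union> {(\<Sum>i=0..r. (-1)^i * esym (r - i) (xvars n) * hsym i (yvars n d)) | r. r > n - d}
   \<union> {(\<Sum>j=0..d. (-1)^j * mpoly_var (i - 1) ^ (d - j) * esym j (yvars n d)) | i. i \<in> {1..n}}"

definition Jideal :: "nat \<Rightarrow> nat \<Rightarrow> nat \<Rightarrow> mpoly set" where
  "Jideal n k d = ideal_gen_in (mpoly_ring (n+d+k)) (Jgens n k d)"

end

theory Submission
  imports Defs "HOL-Computational_Algebra.Formal_Power_Series"
begin

(* At a point z, a generator of the first two kinds becomes the coefficient of X^r in
  H_Y(-X) E_T(X), where E_T(X) = prod_{t in T} (1 + z_t X), H_Y(-X) = prod_{y in Y} (1 + z_y X)^-1,
  Y is the set of y-variables and T that of the t- resp. x-variables.  On Z the values of z on Y occur, with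
  multiplicity, among its values on T, so the factors of H_Y(-X) cancel against factors of E_T(X)
  and the product is a polynomial of degree |T| - |Y| < r.  A generator of the third kind becomes
  prod_{y in Y} (x_i - z_y), which vanishes because x_i is one of the z_y; up to sign and reversal
  of its coefficients this is the same cancellation with a singleton in place of Y. *)

section \<open>Evaluation of polynomials\<close>

definition monom_eval :: "('v \<Rightarrow> 'a::comm_semiring_1) \<Rightarrow> ('v \<Rightarrow>\<^sub>0 nat) \<Rightarrow> 'a" where
  "monom_eval z m = (\<Prod>v\<in>Poly_Mapping.keys m. z v ^ Poly_Mapping.lookup m v)"

lemma monom_eval_superset:
  assumes "finite S" "Poly_Mapping.keys m \<subseteq> S"
  shows "monom_eval z m = (\<Prod>v\<in>S. z v ^ Poly_Mapping.lookup m v)"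
  unfolding monom_eval_def
  by (rule prod.mono_neutral_left) (use assms in \<open>auto simp: in_keys_iff\<close>)

lemma monom_eval_add: "monom_eval z (m + m') = monom_eval z m * monom_eval z m'"
proof -
  let ?S = "Poly_Mapping.keys m \<union> Poly_Mapping.keys m'"
  have "monom_eval z (m + m') = (\<Prod>v\<in>?S. z v ^ Poly_Mapping.lookup (m + m') v)"
    by (rule monom_eval_superset) (simp_all add: keys_add)
  also have "\<dots> = (\<Prod>v\<in>?S. z v ^ Poly_Mapping.lookup m v) * (\<Prod>v\<in>?S. z v ^ Poly_Mapping.lookup m' v)"
    by (simp add: lookup_add power_add prod.distrib)
  also have "\<dots> = monom_eval z m * monom_eval z m'"
    using monom_eval_superset[of ?S m z] monom_eval_superset[of ?S m' z] by simp
  finally show ?thesis .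
qed

lemma monom_eval_0 [simp]: "monom_eval z 0 = 1"
  by (simp add: monom_eval_def)

lemma monom_eval_single [simp]: "monom_eval z (Poly_Mapping.single v i) = z v ^ i"
  by (simp add: monom_eval_def)

lemma mpoly_eval_superset:
  assumes "finite S" "Poly_Mapping.keys p \<subseteq> S"
  shows "mpoly_eval z p = (\<Sum>m\<in>S. Poly_Mapping.lookup p m * monom_eval z m)"
  unfolding mpoly_eval_def monom_eval_def[symmetric]
  by (rule sum.mono_neutral_left) (use assms in \<open>auto simp: in_keys_iff\<close>)

lemma mpoly_eval_add [simp]: "mpoly_eval z (p + q) = mpoly_eval z p + mpoly_eval z q"
proof -
  let ?S = "Poly_Mapping.keys p \<union> Poly_Mapping.keys q"
  have "finite ?S" by simp
  then show ?thesis
    using mpoly_eval_superset[of ?S] keys_add[of p q]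
    by (simp add: lookup_add distrib_right sum.distrib)
qed

lemma mpoly_eval_0 [simp]: "mpoly_eval z 0 = 0"
  by (simp add: mpoly_eval_def)

lemma mpoly_eval_1 [simp]: "mpoly_eval z 1 = 1"
  by (simp add: mpoly_eval_def)

lemma mpoly_eval_single [simp]: "mpoly_eval z (Poly_Mapping.single m c) = c * monom_eval z m"
  by (simp add: mpoly_eval_def monom_eval_def)

lemma mpoly_eval_var [simp]: "mpoly_eval z (mpoly_var v) = z v"
  by (simp add: mpoly_var_def)

lemma mpoly_eval_uminus [simp]: "mpoly_eval z (- p) = - mpoly_eval z p"
  by (simp add: mpoly_eval_def sum_negf)

lemma mpoly_eval_sum [simp]: "mpoly_eval z (sum f A) = (\<Sum>a\<in>A. mpoly_eval z (f a))"
  by (induction A rule: infinite_finite_induct) auto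

lemma sum_single_lookup:
  "(\<Sum>m\<in>Poly_Mapping.keys p. Poly_Mapping.single m (Poly_Mapping.lookup p m)) = p"
  by (rule poly_mapping_eqI) (simp add: lookup_sum lookup_single when_def in_keys_iff)

lemma mpoly_eval_mult [simp]: "mpoly_eval z (p * q) = mpoly_eval z p * mpoly_eval z q"
proof -
  let ?a = "Poly_Mapping.lookup p" and ?b = "Poly_Mapping.lookup q"
  have "p * q = (\<Sum>m\<in>Poly_Mapping.keys p. Poly_Mapping.single m (?a m)) *
      (\<Sum>m'\<in>Poly_Mapping.keys q. Poly_Mapping.single m' (?b m'))"
    by (simp only: sum_single_lookup)
  also have "\<dots> = (\<Sum>m\<in>Poly_Mapping.keys p. \<Sum>m'\<in>Poly_Mapping.keys q.
      Poly_Mapping.single (m + m') (?a m * ?b m'))"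
    by (simp add: sum_distrib_left sum_distrib_right mult_single sum.swap[of _ "Poly_Mapping.keys q"])
  finally have "mpoly_eval z (p * q) = (\<Sum>m\<in>Poly_Mapping.keys p. \<Sum>m'\<in>Poly_Mapping.keys q.
      (?a m * monom_eval z m) * (?b m' * monom_eval z m'))"
    by (simp add: monom_eval_add mult_ac)
  also have "\<dots> = mpoly_eval z p * mpoly_eval z q"
    by (simp add: mpoly_eval_def monom_eval_def sum_product)
  finally show ?thesis .
qed

lemma mpoly_eval_power [simp]: "mpoly_eval z (p ^ i) = mpoly_eval z p ^ i"
  by (induction i) auto

lemma mpoly_eval_prod [simp]: "mpoly_eval z (prod f A) = (\<Prod>a\<in>A. mpoly_eval z (f a))"
  by (induction A rule: infinite_finite_induct) auto

section \<open>The polynomial ring and the vanishing ideal\<close>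

lemma mpoly_ring_add: "p \<in> mpoly_ring N \<Longrightarrow> q \<in> mpoly_ring N \<Longrightarrow> p + q \<in> mpoly_ring N"
  unfolding mpoly_ring_def using keys_add[of p q] by blast

lemma mpoly_ring_mult:
  assumes "p \<in> mpoly_ring N" "q \<in> mpoly_ring N"
  shows "p * q \<in> mpoly_ring N"
proof -
  have "Poly_Mapping.keys (a + b) \<subseteq> {..<N}"
    if "a \<in> Poly_Mapping.keys p" "b \<in> Poly_Mapping.keys q" for a b
    using that assms keys_add[of a b] unfolding mpoly_ring_def by blast
  then show ?thesis
    unfolding mpoly_ring_def using keys_mult[of p q] by blast
qed

lemma mpoly_ring_uminus: "p \<in> mpoly_ring N \<Longrightarrow> - p \<in> mpoly_ring N"
  unfolding mpoly_ring_def by simp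

lemma mpoly_ring_0: "0 \<in> mpoly_ring N"
  unfolding mpoly_ring_def by simp

lemma mpoly_ring_1: "1 \<in> mpoly_ring N"
  unfolding mpoly_ring_def by simp

lemma mpoly_ring_single: "Poly_Mapping.keys m \<subseteq> {..<N} \<Longrightarrow> Poly_Mapping.single m c \<in> mpoly_ring N"
  unfolding mpoly_ring_def by simp

lemma mpoly_ring_var: "v < N \<Longrightarrow> mpoly_var v \<in> mpoly_ring N"
  unfolding mpoly_var_def by (rule mpoly_ring_single) simp

lemma mpoly_ring_sum: "(\<And>a. a \<in> A \<Longrightarrow> f a \<in> mpoly_ring N) \<Longrightarrow> sum f A \<in> mpoly_ring N"
  by (induction A rule: infinite_finite_induct) (auto intro: mpoly_ring_add mpoly_ring_0)

lemma mpoly_ring_prod: "(\<And>a. a \<in> A \<Longrightarrow> f a \<in> mpoly_ring N) \<Longrightarrow> prod f A \<in> mpoly_ring N"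
  by (induction A rule: infinite_finite_induct) (auto intro: mpoly_ring_mult mpoly_ring_1)

lemma mpoly_ring_power: "p \<in> mpoly_ring N \<Longrightarrow> p ^ i \<in> mpoly_ring N"
  by (induction i) (auto intro: mpoly_ring_mult mpoly_ring_1)

lemma esym_in_mpoly_ring: "V \<subseteq> {..<N} \<Longrightarrow> esym r V \<in> mpoly_ring N"
  unfolding esym_def by (intro mpoly_ring_sum mpoly_ring_prod mpoly_ring_var) auto

lemma hsym_in_mpoly_ring: "V \<subseteq> {..<N} \<Longrightarrow> hsym r V \<in> mpoly_ring N"
  unfolding hsym_def by (intro mpoly_ring_sum mpoly_ring_single) auto

lemmas mpoly_ring_intros = mpoly_ring_sum mpoly_ring_mult mpoly_ring_power mpoly_ring_uminus
  mpoly_ring_1 mpoly_ring_var esym_in_mpoly_ring hsym_in_mpoly_ring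

lemma vanishing_ideal_is_ideal: "is_ideal_in (mpoly_ring N) (vanishing_ideal N Z)"
  unfolding is_ideal_in_def vanishing_ideal_def
  by (auto intro: mpoly_ring_0 mpoly_ring_add mpoly_ring_mult)

lemma ideal_gen_in_least: "is_ideal_in R I \<Longrightarrow> S \<subseteq> I \<Longrightarrow> ideal_gen_in R S \<subseteq> I"
  unfolding ideal_gen_in_def by blast

section \<open>Symmetric functions of the values of a point\<close>

definition esym_val :: "('v \<Rightarrow> 'a::comm_semiring_1) \<Rightarrow> nat \<Rightarrow> 'v set \<Rightarrow> 'a" where
  "esym_val z r T = (\<Sum>S\<in>{S. S \<subseteq> T \<and> card S = r}. \<Prod>v\<in>S. z v)"

definition monoms_of_degree :: "'v set \<Rightarrow> nat \<Rightarrow> ('v \<Rightarrow>\<^sub>0 nat) set" where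
  "monoms_of_degree Y i = {m. Poly_Mapping.keys m \<subseteq> Y \<and> sum (Poly_Mapping.lookup m) Y = i}"

definition hsym_val :: "('v \<Rightarrow> 'a::comm_semiring_1) \<Rightarrow> nat \<Rightarrow> 'v set \<Rightarrow> 'a" where
  "hsym_val z i Y = (\<Sum>m\<in>monoms_of_degree Y i. monom_eval z m)"

lemma mpoly_eval_esym [simp]: "mpoly_eval z (esym r T) = esym_val z r T"
  by (simp add: esym_def esym_val_def)

lemma mpoly_eval_hsym [simp]: "mpoly_eval z (hsym i Y) = hsym_val z i Y"
  by (simp add: hsym_def hsym_val_def monoms_of_degree_def)

lemma esym_val_0: "finite T \<Longrightarrow> esym_val z 0 T = 1"
proof -
  assume "finite T"
  then have "{S. S \<subseteq> T \<and> card S = 0} = {{}}"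
    by (auto dest: finite_subset)
  then show ?thesis
    by (simp add: esym_val_def)
qed

lemma esym_val_eq_0:
  assumes "finite T" "card T < r"
  shows "esym_val z r T = 0"
proof -
  have "card S \<noteq> r" if "S \<subseteq> T" for S
    using card_mono[OF assms(1) that] assms(2) by simp
  then have "{S. S \<subseteq> T \<and> card S = r} = {}"
    by blast
  then show ?thesis
    unfolding esym_val_def by (simp only: sum.empty)
qed

lemma subsets_card_Suc_insert:
  assumes "finite T" "t \<notin> T"
  shows "{S. S \<subseteq> insert t T \<and> card S = Suc s}
    = {S. S \<subseteq> T \<and> card S = Suc s} \<union> insert t ` {S. S \<subseteq> T \<and> card S = s}"
proof (intro set_eqI iffI)
  fix S assume S: "S \<in> {S. S \<subseteq> insert t T \<and> card S = Suc s}"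
  then have "finite S"
    using assms(1) finite_subset by auto
  show "S \<in> {S. S \<subseteq> T \<and> card S = Suc s} \<union> insert t ` {S. S \<subseteq> T \<and> card S = s}"
  proof (cases "t \<in> S")
    case True
    then have "S = insert t (S - {t})" "S - {t} \<in> {S. S \<subseteq> T \<and> card S = s}"
      using S \<open>finite S\<close> by (auto simp: card_Diff_singleton)
    then show ?thesis
      by blast
  next
    case False
    then show ?thesis
      using S by auto
  qed
next
  fix S assume "S \<in> {S. S \<subseteq> T \<and> card S = Suc s} \<union> insert t ` {S. S \<subseteq> T \<and> card S = s}"
  then show "S \<in> {S. S \<subseteq> insert t T \<and> card S = Suc s}"
  proof
    assume "S \<in> {S. S \<subseteq> T \<and> card S = Suc s}"
    then show ?thesis
      by auto
  next
    assume "S \<in> insert t ` {S. S \<subseteq> T \<and> card S = s}"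
    then obtain S' where "S = insert t S'" "S' \<subseteq> T" "card S' = s"
      by blast
    moreover have "t \<notin> S'" "finite S'"
      using \<open>S' \<subseteq> T\<close> assms finite_subset by auto
    ultimately show ?thesis
      by auto
  qed
qed

lemma esym_val_insert:
  assumes "finite T" "t \<notin> T"
  shows "esym_val z (Suc s) (insert t T) = esym_val z (Suc s) T + z t * esym_val z s T"
proof -
  let ?P = "{S. S \<subseteq> T \<and> card S = s}"
  have fin: "finite S" "t \<notin> S" if "S \<in> ?P" for S
    using that assms finite_subset by auto
  have "inj_on (insert t) ?P"
    using fin(2) by (intro inj_onI) (metis insert_ident)
  then have "(\<Sum>S\<in>insert t ` ?P. \<Prod>v\<in>S. z v) = (\<Sum>S\<in>?P. \<Prod>v\<in>insert t S. z v)"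
    by (rule sum.reindex[unfolded comp_def])
  also have "\<dots> = z t * esym_val z s T"
    using fin by (simp add: esym_val_def sum_distrib_left)
  finally have "(\<Sum>S\<in>insert t ` ?P. \<Prod>v\<in>S. z v) = z t * esym_val z s T" .
  moreover have "esym_val z (Suc s) (insert t T)
      = esym_val z (Suc s) T + (\<Sum>S\<in>insert t ` ?P. \<Prod>v\<in>S. z v)"
    unfolding esym_val_def subsets_card_Suc_insert[OF assms]
    by (rule sum.union_disjoint) (use assms in auto)
  ultimately show ?thesis
    by simp
qed

lemma finite_monoms_of_degree:
  assumes "finite Y"
  shows "finite (monoms_of_degree Y i)"
proof -
  let ?restr = "\<lambda>m. restrict (Poly_Mapping.lookup m) Y"
  have "inj_on ?restr (monoms_of_degree Y i)"
  proof (rule inj_onI, rule poly_mapping_eqI)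
    fix m m' v
    assume m: "m \<in> monoms_of_degree Y i" and m': "m' \<in> monoms_of_degree Y i"
      and eq: "?restr m = ?restr m'"
    show "Poly_Mapping.lookup m v = Poly_Mapping.lookup m' v"
    proof (cases "v \<in> Y")
      case True
      then show ?thesis
        using fun_cong[OF eq, of v] by simp
    next
      case False
      then have "v \<notin> Poly_Mapping.keys m" "v \<notin> Poly_Mapping.keys m'"
        using m m' by (auto simp: monoms_of_degree_def)
      then show ?thesis
        by (simp add: in_keys_iff)
    qed
  qed
  moreover have "?restr ` monoms_of_degree Y i \<subseteq> PiE Y (\<lambda>_. {..i})"
    using member_le_sum[OF _ _ assms, of _ "Poly_Mapping.lookup _"]
    by (fastforce simp: monoms_of_degree_def)
  then have "finite (?restr ` monoms_of_degree Y i)"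
    by (rule finite_subset) (simp add: assms finite_PiE)
  ultimately show ?thesis
    using finite_imageD by blast
qed

lemma monoms_of_degree_0: "finite Y \<Longrightarrow> monoms_of_degree Y 0 = {0}"
  by (auto simp: monoms_of_degree_def in_keys_iff intro!: poly_mapping_eqI)

lemma monoms_of_degree_singleton: "monoms_of_degree {v} i = {Poly_Mapping.single v i}"
  by (auto simp: monoms_of_degree_def in_keys_iff lookup_single when_def
      split: if_splits intro!: poly_mapping_eqI)

lemma monoms_of_degree_insert_Int:
  assumes "finite Y" "y \<notin> Y"
  shows "monoms_of_degree (insert y Y) i \<inter> {m. Poly_Mapping.lookup m y = 0} = monoms_of_degree Y i"
proof (intro set_eqI iffI)
  fix m assume m: "m \<in> monoms_of_degree (insert y Y) i \<inter> {m. Poly_Mapping.lookup m y = 0}"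
  then have "Poly_Mapping.keys m \<subseteq> Y"
    by (auto simp: monoms_of_degree_def in_keys_iff)
  with m assms show "m \<in> monoms_of_degree Y i"
    by (simp add: monoms_of_degree_def)
next
  fix m assume m: "m \<in> monoms_of_degree Y i"
  then have "Poly_Mapping.lookup m y = 0"
    using assms(2) by (auto simp: monoms_of_degree_def in_keys_iff)
  with m assms show "m \<in> monoms_of_degree (insert y Y) i \<inter> {m. Poly_Mapping.lookup m y = 0}"
    by (auto simp: monoms_of_degree_def)
qed

lemma monoms_of_degree_Suc_Diff:
  assumes "finite Y" "y \<in> Y"
  shows "monoms_of_degree Y (Suc s) - {m. Poly_Mapping.lookup m y = 0}
    = (\<lambda>m. m + Poly_Mapping.single y 1) ` monoms_of_degree Y s"
proof -
  have sum_shift: "sum (Poly_Mapping.lookup (m + Poly_Mapping.single y 1)) Y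
      = Suc (sum (Poly_Mapping.lookup m) Y)" for m
    using assms by (simp add: lookup_add sum.distrib lookup_single when_def)
  show ?thesis
  proof (intro set_eqI iffI)
    fix m assume m: "m \<in> monoms_of_degree Y (Suc s) - {m. Poly_Mapping.lookup m y = 0}"
    define m' where "m' = m - Poly_Mapping.single y 1"
    have eq: "m = m' + Poly_Mapping.single y 1"
      using m by (intro poly_mapping_eqI) (auto simp: m'_def lookup_add lookup_minus lookup_single when_def)
    have "Poly_Mapping.keys m' \<subseteq> Poly_Mapping.keys m"
      by (auto simp: m'_def in_keys_iff lookup_minus)
    moreover have "sum (Poly_Mapping.lookup m') Y = s"
      using m sum_shift[of m', folded eq] by (simp add: monoms_of_degree_def)
    ultimately have "m' \<in> monoms_of_degree Y s"
      using m by (auto simp: monoms_of_degree_def)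
    with eq show "m \<in> (\<lambda>m. m + Poly_Mapping.single y 1) ` monoms_of_degree Y s"
      by blast
  next
    fix m assume "m \<in> (\<lambda>m. m + Poly_Mapping.single y 1) ` monoms_of_degree Y s"
    then obtain m' where m': "m' \<in> monoms_of_degree Y s" and eq: "m = m' + Poly_Mapping.single y 1"
      by blast
    have "Poly_Mapping.keys m \<subseteq> Y"
      using m' assms(2) keys_add[of m' "Poly_Mapping.single y 1"] by (auto simp: eq monoms_of_degree_def)
    moreover have "sum (Poly_Mapping.lookup m) Y = Suc s"
      using m' sum_shift[of m'] by (simp add: eq monoms_of_degree_def)
    moreover have "Poly_Mapping.lookup m y \<noteq> 0"
      by (simp add: eq lookup_add)
    ultimately show "m \<in> monoms_of_degree Y (Suc s) - {m. Poly_Mapping.lookup m y = 0}"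
      by (simp add: monoms_of_degree_def)
  qed
qed

lemma hsym_val_0: "finite Y \<Longrightarrow> hsym_val z 0 Y = 1"
  by (simp add: hsym_val_def monoms_of_degree_0)

lemma hsym_val_empty: "hsym_val z (Suc i) {} = 0"
  by (simp add: hsym_val_def monoms_of_degree_def)

lemma hsym_val_singleton: "hsym_val z i {v} = z v ^ i"
  by (simp add: hsym_val_def monoms_of_degree_singleton)

lemma hsym_val_insert:
  assumes "finite Y" "y \<notin> Y"
  shows "hsym_val z (Suc s) (insert y Y) = hsym_val z (Suc s) Y + z y * hsym_val z s (insert y Y)"
proof -
  let ?shift = "\<lambda>m. m + Poly_Mapping.single y 1"
  have "hsym_val z (Suc s) (insert y Y)
      = hsym_val z (Suc s) Y + (\<Sum>m\<in>?shift ` monoms_of_degree (insert y Y) s. monom_eval z m)"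
    unfolding hsym_val_def
    using sum.Int_Diff[OF finite_monoms_of_degree, of "insert y Y" "monom_eval z" "Suc s"
        "{m. Poly_Mapping.lookup m y = 0}"] assms
    by (simp add: monoms_of_degree_insert_Int monoms_of_degree_Suc_Diff)
  also have "(\<Sum>m\<in>?shift ` monoms_of_degree (insert y Y) s. monom_eval z m)
      = z y * hsym_val z s (insert y Y)"
    by (subst sum.reindex) (simp_all add: inj_on_def hsym_val_def monom_eval_add sum_distrib_left mult.commute)
  finally show ?thesis .
qed

section \<open>Generating series\<close>

definition esym_fps :: "('v \<Rightarrow> 'a::comm_ring_1) \<Rightarrow> 'v set \<Rightarrow> 'a fps" where
  "esym_fps z T = Abs_fps (\<lambda>r. esym_val z r T)"

definition hsym_fps :: "('v \<Rightarrow> 'a::comm_ring_1) \<Rightarrow> 'v set \<Rightarrow> 'a fps" where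
  "hsym_fps z Y = Abs_fps (\<lambda>i. (-1) ^ i * hsym_val z i Y)"

lemma esym_fps_insert:
  assumes "finite T" "t \<notin> T"
  shows "esym_fps z (insert t T) = esym_fps z T * (1 + fps_const (z t) * fps_X)"
proof (rule fps_ext)
  fix r
  show "fps_nth (esym_fps z (insert t T)) r = fps_nth (esym_fps z T * (1 + fps_const (z t) * fps_X)) r"
  proof (cases r)
    case 0
    then show ?thesis
      using assms by (simp add: esym_fps_def esym_val_0)
  next
    case (Suc s)
    then show ?thesis
      using esym_val_insert[OF assms, of z s]
      by (simp add: esym_fps_def distrib_left mult.assoc[symmetric] mult.commute[of _ "fps_const (z t)"])
  qed
qed

lemma hsym_fps_insert:
  assumes "finite Y" "y \<notin> Y"
  shows "hsym_fps z (insert y Y) * (1 + fps_const (z y) * fps_X) = hsym_fps z Y"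
proof (rule fps_ext)
  fix r
  show "fps_nth (hsym_fps z (insert y Y) * (1 + fps_const (z y) * fps_X)) r = fps_nth (hsym_fps z Y) r"
  proof (cases r)
    case 0
    then show ?thesis
      using assms by (simp add: hsym_fps_def hsym_val_0)
  next
    case (Suc s)
    let ?H = "hsym_fps z (insert y Y)"
    have "fps_nth (?H * (1 + fps_const (z y) * fps_X)) r = fps_nth ?H r + z y * fps_nth ?H s"
      by (simp add: Suc distrib_left mult.assoc[symmetric] mult.commute[of _ "fps_const (z y)"])
    also have "\<dots> = (-1) ^ r * hsym_val z r Y"
      using hsym_val_insert[OF assms, of z s] Suc by (simp add: hsym_fps_def algebra_simps)
    finally show ?thesis
      by (simp add: hsym_fps_def)
  qed
qed

lemma hsym_fps_empty: "hsym_fps z {} = 1"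
proof (rule fps_ext)
  fix r
  show "fps_nth (hsym_fps z {}) r = fps_nth 1 r"
    by (cases r) (simp_all add: hsym_fps_def hsym_val_0 hsym_val_empty)
qed

lemma hsym_fps_mult_esym_fps:
  assumes "finite Y" "finite T" "inj_on f Y" "f ` Y \<subseteq> T" "\<forall>y\<in>Y. z (f y) = z y"
  shows "hsym_fps z Y * esym_fps z T = esym_fps z (T - f ` Y)"
  using assms
proof (induction Y arbitrary: T rule: finite_induct)
  case empty
  then show ?case
    by (simp add: hsym_fps_empty)
next
  case (insert y Y)
  let ?T' = "T - {f y}"
  have T: "T = insert (f y) ?T'"
    using insert.prems by auto
  have "hsym_fps z (insert y Y) * esym_fps z T
      = (hsym_fps z (insert y Y) * (1 + fps_const (z y) * fps_X)) * esym_fps z ?T'"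
    using esym_fps_insert[of ?T' "f y" z] T insert.prems by (simp add: mult_ac)
  also have "\<dots> = hsym_fps z Y * esym_fps z ?T'"
    by (simp only: hsym_fps_insert[OF insert.hyps])
  also have "\<dots> = esym_fps z (?T' - f ` Y)"
    using insert.prems insert.hyps(2) by (intro insert.IH) (auto simp: inj_on_def)
  also have "?T' - f ` Y = T - f ` insert y Y"
    by auto
  finally show ?case .
qed

definition values_embed :: "('v \<Rightarrow> 'a) \<Rightarrow> 'v set \<Rightarrow> 'v set \<Rightarrow> bool" where
  "values_embed z Y T \<longleftrightarrow> (\<exists>f. inj_on f Y \<and> f ` Y \<subseteq> T \<and> (\<forall>y\<in>Y. z (f y) = z y))"

lemma esym_hsym_convolution_eq_0:
  fixes z :: "'v \<Rightarrow> 'a::comm_ring_1"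
  assumes "finite Y" "finite T" "values_embed z Y T" "card T < r + card Y"
  shows "(\<Sum>i=0..r. (-1) ^ i * esym_val z (r - i) T * hsym_val z i Y) = 0"
proof -
  obtain f where f: "inj_on f Y" "f ` Y \<subseteq> T" "\<forall>y\<in>Y. z (f y) = z y"
    using assms(3) unfolding values_embed_def by blast
  have "card (T - f ` Y) = card T - card Y"
    using f assms(1,2) by (simp add: card_Diff_subset card_image finite_subset)
  moreover have "card Y \<le> card T"
    using card_inj_on_le[OF f(1,2) assms(2)] .
  ultimately have "card (T - f ` Y) < r"
    using assms(4) by linarith
  have "(\<Sum>i=0..r. (-1) ^ i * esym_val z (r - i) T * hsym_val z i Y)
      = fps_nth (hsym_fps z Y * esym_fps z T) r"
    by (simp only: fps_mult_nth hsym_fps_def esym_fps_def fps_nth_Abs_fps) (simp add: mult_ac)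
  also have "\<dots> = esym_val z r (T - f ` Y)"
    using hsym_fps_mult_esym_fps[OF assms(1,2) f] by (simp add: esym_fps_def)
  also have "\<dots> = 0"
    using \<open>card (T - f ` Y) < r\<close> assms(2) by (simp add: esym_val_eq_0)
  finally show ?thesis .
qed

lemma minus_one_power_diff: "j \<le> d \<Longrightarrow> (-1 :: 'a::ring_1) ^ (d - j) = (-1) ^ d * (-1) ^ j"
  by (auto simp: minus_one_power_iff even_diff_nat)

lemma char_poly_esym_root:
  fixes z :: "'v \<Rightarrow> 'a::comm_ring_1"
  assumes "finite T" "t \<in> T"
  shows "(\<Sum>j=0..card T. (-1) ^ j * z t ^ (card T - j) * esym_val z j T) = 0"
proof -
  let ?d = "card T"
  have "values_embed z {t} T"
    unfolding values_embed_def using assms(2) by (intro exI[of _ id]) auto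
  then have "0 = (\<Sum>i=0..?d. (-1) ^ i * esym_val z (?d - i) T * z t ^ i)"
    using esym_hsym_convolution_eq_0[of "{t}" T z ?d] assms(1) by (simp add: hsym_val_singleton)
  also have "\<dots> = (\<Sum>j=0..?d. (-1) ^ (?d - j) * esym_val z j T * z t ^ (?d - j))"
    by (subst sum.atLeastAtMost_rev) (auto intro: sum.cong)
  also have "\<dots> = (-1) ^ ?d * (\<Sum>j=0..?d. (-1) ^ j * z t ^ (?d - j) * esym_val z j T)"
    by (auto simp: sum_distrib_left minus_one_power_diff mult_ac intro: sum.cong)
  finally show ?thesis
    by (metis left_minus_one_mult_self mult_zero_right)
qed

section \<open>The points of Z and the generators\<close>

lemma Zset_values_embed_yvars_tvars:
  assumes "z \<in> Zset n k d"
  shows "values_embed z (yvars n d) (tvars n d k)"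
proof -
  obtain f where f_into: "\<forall>i\<in>{n+1..n+d}. f i \<in> {n+d+1..n+d+k}" and f_inj: "inj_on f {n+1..n+d}"
    and f_val: "\<forall>i\<in>{n+1..n+d}. z (i - 1) = z (f i - 1)"
    using assms unfolding Zset_def by blast
  define F where "F v = f (v + 1) - 1" for v
  have F: "v + 1 \<in> {n+1..n+d}" "f (v + 1) \<in> {n+d+1..n+d+k}" "z (F v) = z v"
    if "v \<in> yvars n d" for v
  proof -
    show "v + 1 \<in> {n+1..n+d}"
      using that by (auto simp: yvars_def)
    then have "f (v + 1) \<in> {n+d+1..n+d+k}" "z ((v + 1) - 1) = z (f (v + 1) - 1)"
      using f_into f_val by blast+
    then show "f (v + 1) \<in> {n+d+1..n+d+k}" "z (F v) = z v"
      by (simp_all add: F_def)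
  qed
  have "inj_on F (yvars n d)"
  proof (rule inj_onI)
    fix v v' assume v: "v \<in> yvars n d" and v': "v' \<in> yvars n d" and "F v = F v'"
    moreover have "f (v + 1) \<ge> 1" "f (v' + 1) \<ge> 1"
      using F(2)[OF v] F(2)[OF v'] by simp_all
    ultimately have "f (v + 1) = f (v' + 1)"
      unfolding F_def by linarith
    then show "v = v'"
      using f_inj F(1)[OF v] F(1)[OF v'] by (auto dest: inj_onD)
  qed
  moreover have "F v \<in> tvars n d k" if "v \<in> yvars n d" for v
    using F(2)[OF that] by (auto simp: F_def tvars_def)
  ultimately show ?thesis
    unfolding values_embed_def using F(3) by (intro exI[of _ F]) auto
qed

lemma Zset_values_embed_yvars_xvars:
  assumes "z \<in> Zset n k d"
  shows "values_embed z (yvars n d) (xvars n)"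
proof -
  obtain g where g_onto: "g ` {1..n} = {n+1..n+d}"
    and g_val: "\<forall>j\<in>{1..n}. z (j - 1) = z (g j - 1)"
    using assms unfolding Zset_def by blast
  define G where "G v = inv_into {1..n} g (v + 1) - 1" for v
  have G: "inv_into {1..n} g (v + 1) \<in> {1..n}" "g (inv_into {1..n} g (v + 1)) = v + 1"
    if "v \<in> yvars n d" for v
  proof -
    have "v + 1 \<in> g ` {1..n}"
      using that g_onto by (auto simp: yvars_def)
    then show "inv_into {1..n} g (v + 1) \<in> {1..n}" "g (inv_into {1..n} g (v + 1)) = v + 1"
      by (rule inv_into_into, rule f_inv_into_f)
  qed
  have "inj_on G (yvars n d)"
  proof (rule inj_onI)
    fix v v' assume "v \<in> yvars n d" "v' \<in> yvars n d" "G v = G v'"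
    moreover have "inv_into {1..n} g (v + 1) \<ge> 1" "inv_into {1..n} g (v' + 1) \<ge> 1"
      using G(1) \<open>v \<in> yvars n d\<close> \<open>v' \<in> yvars n d\<close> by fastforce+
    ultimately have "inv_into {1..n} g (v + 1) = inv_into {1..n} g (v' + 1)"
      unfolding G_def by linarith
    then show "v = v'"
      using G(2) \<open>v \<in> yvars n d\<close> \<open>v' \<in> yvars n d\<close> by (metis add_right_cancel)
  qed
  moreover have "G ` yvars n d \<subseteq> xvars n"
    using G(1) by (fastforce simp: G_def xvars_def)
  moreover have "\<forall>v\<in>yvars n d. z (G v) = z v"
    using G g_val by (fastforce simp: G_def)
  ultimately show ?thesis
    unfolding values_embed_def by blast
qed

lemma Zset_xvar_value_in_yvars:
  assumes "z \<in> Zset n k d" "i < n"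
  shows "\<exists>t\<in>yvars n d. z i = z t"
proof -
  obtain g where g_into: "\<forall>j\<in>{1..n}. g j \<in> {n+1..n+d}"
    and g_val: "\<forall>j\<in>{1..n}. z (j - 1) = z (g j - 1)"
    using assms(1) unfolding Zset_def by blast
  have "i + 1 \<in> {1..n}"
    using assms(2) by simp
  then have "g (i + 1) \<in> {n+1..n+d}" "z ((i + 1) - 1) = z (g (i + 1) - 1)"
    using g_into g_val by blast+
  then show ?thesis
    by (intro bexI[of _ "g (i + 1) - 1"]) (auto simp: yvars_def)
qed

lemma esym_hsym_relation_in_vanishing_ideal:
  assumes "T \<subseteq> {..<N}" "Y \<subseteq> {..<N}" "\<forall>z\<in>Z. values_embed z Y T" "card T < r + card Y"
  shows "(\<Sum>i=0..r. (-1) ^ i * esym (r - i) T * hsym i Y) \<in> vanishing_ideal N Z"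
proof -
  have "finite T" "finite Y"
    using assms(1,2) by (simp_all add: finite_subset)
  with assms show ?thesis
    unfolding vanishing_ideal_def
    by (auto intro!: mpoly_ring_intros esym_hsym_convolution_eq_0)
qed

lemma char_poly_in_vanishing_ideal:
  assumes "v < N" "Y \<subseteq> {..<N}" "\<forall>z\<in>Z. \<exists>t\<in>Y. z v = z t"
  shows "(\<Sum>j=0..card Y. (-1) ^ j * mpoly_var v ^ (card Y - j) * esym j Y) \<in> vanishing_ideal N Z"
proof -
  have "finite Y"
    using assms(2) by (simp add: finite_subset)
  with assms show ?thesis
    unfolding vanishing_ideal_def
    by (force intro!: mpoly_ring_intros dest: char_poly_esym_root[of Y _ _])
qed

theorem lemma3p15:
  fixes n k d :: nat
  assumes "0 < d" and "d \<le> k" and "k \<le> n"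
  shows "Jideal n k d \<subseteq> vanishing_ideal (n+d+k) (Zset n k d)"
proof -
  let ?V = "vanishing_ideal (n+d+k) (Zset n k d)"
  have vars: "tvars n d k \<subseteq> {..<n+d+k}" "yvars n d \<subseteq> {..<n+d+k}" "xvars n \<subseteq> {..<n+d+k}"
    and cards: "card (tvars n d k) = k" "card (yvars n d) = d" "card (xvars n) = n"
    by (auto simp: tvars_def yvars_def xvars_def)
  have "(\<Sum>i=0..r. (-1) ^ i * esym (r - i) (tvars n d k) * hsym i (yvars n d)) \<in> ?V" if "r > k - d" for r
    using that by (intro esym_hsym_relation_in_vanishing_ideal vars) (auto simp: cards Zset_values_embed_yvars_tvars)
  moreover have "(\<Sum>i=0..r. (-1) ^ i * esym (r - i) (xvars n) * hsym i (yvars n d)) \<in> ?V" if "r > n - d" for r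
    using that by (intro esym_hsym_relation_in_vanishing_ideal vars) (auto simp: cards Zset_values_embed_yvars_xvars)
  moreover have "(\<Sum>j=0..d. (-1) ^ j * mpoly_var (i - 1) ^ (d - j) * esym j (yvars n d)) \<in> ?V"
    if "i \<in> {1..n}" for i
    using char_poly_in_vanishing_ideal[OF _ vars(2), of "i - 1"] that Zset_xvar_value_in_yvars
    by (auto simp: cards)
  ultimately have "Jgens n k d \<subseteq> ?V"
    unfolding Jgens_def by blast
  then show ?thesis
    unfolding Jideal_def by (rule ideal_gen_in_least[OF vanishing_ideal_is_ideal])
qed

end
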